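(* Fix $\theta>0$. As $N\to\infty$: - $\kappa_N(\theta)/N\to e^{-1/\theta}$; - the optimal winning probability $W(N,\kappa_N(\theta))/[N]_\theta\to 1/e$. In particular, the limit of the optimal winning probability does not depend on $\theta$.
   Context: Permutations of $\{1,\dots,N\}$ are written in one-line notation; $\mathfrak S_N$ is the set of all of them. An entry $\pi_j$ is a left-to-right maximum if $\pi_j>\pi_i$ for all $i<j$; $\mathrm{lrm}(\pi)$ is the number of left-to-right maxima. Definitions: - $[m]_\theta=\theta(\theta+1)\cdots(\theta+m-1)$; this equals $\sum_{\pi\in\mathfrak S_m}\theta^{\mathrm{lrm}(\pi)}$. - For $0\le k\le N-1$, $\pi$ is $k$-winnable if the first index $j>k$ with $\pi_j$ a left-to-right maximum has $\pi_j=N$. - $W(N,k)=\sum_{k\text{-winnable }\pi\in\mathfrak S_N}\theta^{\mathrm{lrm}(\pi)}$. - With $H_N(k)=\sum_{i=k+1}^{N-1}1/i$ for $0\le k\le N-1$, set $\kappa_N(\theta)=0$ if $\theta\le H_N(0)^{-1}$; $\kappa_N(\theta)=k$ if $H_N(k-1)^{-1}<\theta\le H_N(k)^{-1}$ for some $1\le k\le N-2$; and $\kappa_N(\theta)=N-1$ if $\theta>N-1$. $\kappa_N(\theta)$ is the number of initial rejections of an optimal strategy in the best choice game where $\pi\in\mathfrak S_N$ has probability $\theta^{\mathrm{lrm}(\pi)}/[N]_\theta$, and $W(N,\kappa_N(\theta))/[N]_\theta$ is the optimal winning probability. *)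

theory Defs
  imports Complex_Main "HOL-Combinatorics.Permutations"
begin

text \<open>Permutations of {1..N} are functions p with p permutes {1..N};
  the one-line notation is pi_j = p j for j in {1..N}.\<close>

definition is_lrm :: "(nat \<Rightarrow> nat) \<Rightarrow> nat \<Rightarrow> bool" where
  "is_lrm p j \<longleftrightarrow> (\<forall>i\<in>{1..<j}. p i < p j)"

definition lrm :: "nat \<Rightarrow> (nat \<Rightarrow> nat) \<Rightarrow> nat" where
  "lrm N p = card {j\<in>{1..N}. is_lrm p j}"

definition rising :: "real \<Rightarrow> nat \<Rightarrow> real" where
  "rising \<theta> m = pochhammer \<theta> m"

definition winnable :: "nat \<Rightarrow> nat \<Rightarrow> (nat \<Rightarrow> nat) \<Rightarrow> bool" where
  "winnable N k p \<longleftrightarrow>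
     (\<exists>j. k < j \<and> j \<le> N \<and> is_lrm p j \<and> (\<forall>i. k < i \<and> i < j \<longrightarrow> \<not> is_lrm p i) \<and> p j = N)"

definition W :: "nat \<Rightarrow> nat \<Rightarrow> real \<Rightarrow> real" where
  "W N k \<theta> = (\<Sum>p\<in>{p. p permutes {1..N} \<and> winnable N k p}. \<theta> ^ lrm N p)"

definition H :: "nat \<Rightarrow> nat \<Rightarrow> real" where
  "H N k = (\<Sum>i\<in>{k+1..N-1}. 1 / real i)"

definition kappa :: "nat \<Rightarrow> real \<Rightarrow> nat" where
  "kappa N \<theta> =
     (if \<theta> \<le> inverse (H N 0) then 0
      else if \<theta> > real N - 1 then N - 1
      else (THE k. 1 \<le> k \<and> k \<le> N - 2 \<and> inverse (H N (k - 1)) < \<theta> \<and> \<theta> \<le> inverse (H N k)))"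

end

theory Submission
  imports Defs
begin

text \<open>Under the weight \<open>\<theta> ^ lrm\<close> the events "position \<open>j\<close> is a left-to-right maximum" are
  independent, of probability \<open>\<theta> / (\<theta> + j - 1)\<close>: appending a last value to a permutation of
  \<open>{1..N}\<close> creates a new maximum for exactly one of the \<open>N + 1\<close> choices. This gives the closed
  form \<open>W N k / [N]_\<theta> = \<theta> H N (k - 1) \<Prod>j>k. (j - 1) / (\<theta> + j - 1)\<close>. The threshold \<open>\<kappa>\<close> is where
  \<open>\<theta> H N k\<close> crosses \<open>1\<close>, and \<open>H N k \<approx> ln (N / k)\<close> forces \<open>\<kappa> / N \<rightarrow> exp (- 1 / \<theta>)\<close>. At \<open>k = \<kappa>\<close>
  both \<open>\<theta> H N (\<kappa> - 1)\<close> and minus the logarithm of the product are \<open>1 + O(1 / \<kappa>)\<close>, so the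
  winning probability tends to \<open>exp (- 1)\<close> whatever \<open>\<theta>\<close> is.\<close>

section \<open>Weighted counting of permutations by left-to-right maxima\<close>

definition shift_from :: "nat \<Rightarrow> nat \<Rightarrow> nat" where
  "shift_from v y = (if v \<le> y then Suc y else y)"

definition unshift_from :: "nat \<Rightarrow> nat \<Rightarrow> nat" where
  "unshift_from v y = (if v < y then y - 1 else y)"

definition append_value :: "nat \<Rightarrow> (nat \<Rightarrow> nat) \<Rightarrow> nat \<Rightarrow> nat \<Rightarrow> nat" where
  "append_value N q v = (\<lambda>j. if j \<in> {1..N} then shift_from v (q j) else if j = Suc N then v else j)"

definition split_last_value :: "nat \<Rightarrow> (nat \<Rightarrow> nat) \<Rightarrow> (nat \<Rightarrow> nat) \<times> nat" where
  "split_last_value N p = ((\<lambda>j. if j \<in> {1..N} then unshift_from (p (Suc N)) (p j) else j), p (Suc N))"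

lemma append_value_permutes:
  assumes q: "q permutes {1..N}" and v: "v \<in> {1..Suc N}"
  shows "append_value N q v permutes {1..Suc N}"
proof (rule bij_imp_permutes)
  have q_in: "j \<in> {1..N} \<Longrightarrow> q j \<in> {1..N}" for j
    using permutes_in_image[OF q] by auto
  have inj: "inj_on (append_value N q v) {1..Suc N}"
  proof (rule inj_onI)
    fix x y
    assume x: "x \<in> {1..Suc N}" and y: "y \<in> {1..Suc N}"
      and eq: "append_value N q v x = append_value N q v y"
    consider "x = Suc N \<or> y = Suc N" | "x \<in> {1..N}" "y \<in> {1..N}"
      using x y by fastforce
    then show "x = y"
    proof cases
      case 1
      then show ?thesis
        using eq x y q_in[of x] q_in[of y] by (auto simp: append_value_def shift_from_def split: if_splits)
    next
      case 2
      then have "q x = q y"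
        using eq by (auto simp: append_value_def shift_from_def split: if_splits)
      then show ?thesis
        using permutes_inj[OF q] by (auto dest: injD)
    qed
  qed
  have "append_value N q v ` {1..Suc N} \<subseteq> {1..Suc N}"
    using q_in v by (auto simp: append_value_def shift_from_def)
  then show "bij_betw (append_value N q v) {1..Suc N} {1..Suc N}"
    using endo_inj_surj[OF _ _ inj] inj by (simp add: bij_betw_def)
  show "x \<notin> {1..Suc N} \<Longrightarrow> append_value N q v x = x" for x
    by (auto simp: append_value_def)
qed

lemma split_last_value_permutes:
  assumes p: "p permutes {1..Suc N}"
  shows "fst (split_last_value N p) permutes {1..N}" and "snd (split_last_value N p) \<in> {1..Suc N}"
proof -
  let ?q = "fst (split_last_value N p)"
  have p_in: "j \<in> {1..Suc N} \<Longrightarrow> p j \<in> {1..Suc N}" for j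
    using permutes_in_image[OF p] by auto
  have p_inj: "p x = p y \<Longrightarrow> x = y" for x y
    using permutes_inj[OF p] by (auto dest: injD)
  have p_ne_last: "j \<in> {1..N} \<Longrightarrow> p j \<noteq> p (Suc N)" for j
    using p_inj by fastforce
  show "snd (split_last_value N p) \<in> {1..Suc N}"
    using p_in[of "Suc N"] by (simp add: split_last_value_def)
  have inj: "inj_on ?q {1..N}"
  proof (rule inj_onI)
    fix x y
    assume "x \<in> {1..N}" "y \<in> {1..N}" "?q x = ?q y"
    then have "p x = p y"
      using p_ne_last[of x] p_ne_last[of y]
      by (auto simp: split_last_value_def unshift_from_def split: if_splits)
    then show "x = y" by (rule p_inj)
  qed
  have "?q ` {1..N} \<subseteq> {1..N}"
    using p_ne_last p_in by (fastforce simp: split_last_value_def unshift_from_def)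
  then show "?q permutes {1..N}"
    using endo_inj_surj[OF _ _ inj] inj
    by (intro bij_imp_permutes) (auto simp: bij_betw_def split_last_value_def)
qed

lemma sum_permutes_Suc:
  fixes g :: "(nat \<Rightarrow> nat) \<Rightarrow> 'a :: comm_monoid_add"
  shows "(\<Sum>p\<in>{p. p permutes {1..Suc N}}. g p)
       = (\<Sum>(q, v)\<in>{q. q permutes {1..N}} \<times> {1..Suc N}. g (append_value N q v))"
proof (rule sum.reindex_bij_witness[where i = "\<lambda>(q, v). append_value N q v" and j = "split_last_value N"])
  fix p
  assume "p \<in> {p. p permutes {1..Suc N}}"
  then have p: "p permutes {1..Suc N}" by simp
  have p_inj: "p x = p y \<Longrightarrow> x = y" for x y
    using permutes_inj[OF p] by (auto dest: injD)
  have p_ne_last: "j \<in> {1..N} \<Longrightarrow> p j \<noteq> p (Suc N)" for j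
    using p_inj by fastforce
  show "split_last_value N p \<in> {q. q permutes {1..N}} \<times> {1..Suc N}"
    using split_last_value_permutes[OF p] by (cases "split_last_value N p") auto
  show inverse: "(case split_last_value N p of (q, v) \<Rightarrow> append_value N q v) = p"
  proof
    fix j
    show "(case split_last_value N p of (q, v) \<Rightarrow> append_value N q v) j = p j"
    proof (cases "j \<in> {1..N}")
      case True
      then show ?thesis
        using p_ne_last[OF True]
        by (auto simp: split_last_value_def append_value_def shift_from_def unshift_from_def)
    next
      case False
      then show ?thesis
        using permutes_not_in[OF p, of j] by (auto simp: split_last_value_def append_value_def)
    qed
  qed
  show "(case split_last_value N p of (q, v) \<Rightarrow> g (append_value N q v)) = g p"
    using inverse by (cases "split_last_value N p") auto
next
  fix qv
  assume "qv \<in> {q. q permutes {1..N}} \<times> {1..Suc N}"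
  then obtain q v where qv: "qv = (q, v)" and q: "q permutes {1..N}" and v: "v \<in> {1..Suc N}"
    by auto
  show "(case qv of (q, v) \<Rightarrow> append_value N q v) \<in> {p. p permutes {1..Suc N}}"
    using append_value_permutes[OF q v] qv by simp
  show "split_last_value N (case qv of (q, v) \<Rightarrow> append_value N q v) = qv"
    using permutes_not_in[OF q] qv
    by (auto simp: split_last_value_def append_value_def shift_from_def unshift_from_def fun_eq_iff)
qed

lemma is_lrm_append_value:
  assumes "j \<in> {1..N}"
  shows "is_lrm (append_value N q v) j \<longleftrightarrow> is_lrm q j"
  using assms unfolding is_lrm_def by (auto simp: append_value_def shift_from_def)

lemma is_lrm_append_value_last:
  assumes q: "q permutes {1..N}" and v: "v \<in> {1..Suc N}"
  shows "is_lrm (append_value N q v) (Suc N) \<longleftrightarrow> v = Suc N"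
proof
  assume "v = Suc N"
  moreover have "\<And>i. i \<in> {1..N} \<Longrightarrow> q i \<in> {1..N}"
    using permutes_in_image[OF q] by auto
  ultimately show "is_lrm (append_value N q v) (Suc N)"
    unfolding is_lrm_def append_value_def shift_from_def by fastforce
next
  assume lrm: "is_lrm (append_value N q v) (Suc N)"
  show "v = Suc N"
  proof (rule ccontr)
    assume "v \<noteq> Suc N"
    then have "v \<in> {1..N}" using v by auto
    then obtain i where i: "i \<in> {1..N}" "q i = v"
      using permutes_in_image[OF q] permutes_surj[OF q] by (metis surjD)
    then have "i \<in> {1..<Suc N}" by auto
    then have "append_value N q v i < append_value N q v (Suc N)"
      using lrm unfolding is_lrm_def by blast
    then show False
      using i by (simp add: append_value_def shift_from_def)
  qed
qed

lemma sum_permutes_prod_lrm: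
  fixes a b :: "nat \<Rightarrow> 'a :: comm_semiring_1"
  shows "(\<Sum>p\<in>{p. p permutes {1..N}}. \<Prod>j\<in>{1..N}. if is_lrm p j then a j else b j)
       = (\<Prod>j\<in>{1..N}. a j + of_nat (j - 1) * b j)"
proof (induction N)
  case 0
  then show ?case by simp
next
  case (Suc N)
  let ?w = "\<lambda>p. \<Prod>j\<in>{1..N}. if is_lrm p j then a j else b j"
  let ?last = "\<lambda>v. if v = Suc N then a (Suc N) else b (Suc N)"
  have weight: "(\<Prod>j\<in>{1..Suc N}. if is_lrm (append_value N q v) j then a j else b j) = ?w q * ?last v"
    if "q permutes {1..N}" "v \<in> {1..Suc N}" for q v
  proof -
    have "(\<Prod>j\<in>{1..N}. if is_lrm (append_value N q v) j then a j else b j) = ?w q"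
      by (rule prod.cong) (auto simp: is_lrm_append_value)
    then show ?thesis
      using is_lrm_append_value_last[OF that] by simp
  qed
  have last_sum: "(\<Sum>v\<in>{1..Suc N}. ?last v) = a (Suc N) + of_nat N * b (Suc N)"
    by (simp add: atLeastAtMostSuc_conv)
  have "(\<Sum>p\<in>{p. p permutes {1..Suc N}}. \<Prod>j\<in>{1..Suc N}. if is_lrm p j then a j else b j)
      = (\<Sum>(q, v)\<in>{q. q permutes {1..N}} \<times> {1..Suc N}. ?w q * ?last v)"
    unfolding sum_permutes_Suc by (rule sum.cong[OF refl]) (clarify, simp only: prod.case mem_Collect_eq weight)
  also have "\<dots> = (\<Sum>q\<in>{q. q permutes {1..N}}. \<Sum>v\<in>{1..Suc N}. ?w q * ?last v)"
    by (rule sum.cartesian_product[symmetric])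
  also have "\<dots> = (\<Sum>q\<in>{q. q permutes {1..N}}. ?w q) * (a (Suc N) + of_nat N * b (Suc N))"
    by (simp add: sum_distrib_left[symmetric] sum_distrib_right last_sum add.commute)
  also have "\<dots> = (\<Prod>j\<in>{1..Suc N}. a j + of_nat (j - 1) * b j)"
    unfolding Suc.IH by simp
  finally show ?case .
qed

lemma power_lrm_eq_prod:
  fixes \<theta> :: "'a :: comm_monoid_mult"
  shows "\<theta> ^ lrm N p = (\<Prod>j\<in>{1..N}. if is_lrm p j then \<theta> else 1)"
  by (simp add: lrm_def prod.If_cases Int_def)

lemma prod_atLeastAtMost_split:
  fixes g :: "nat \<Rightarrow> 'a :: comm_monoid_mult"
  assumes "k \<le> N" "m \<le> Suc k"
  shows "prod g {m..N} = prod g {m..k} * prod g {k+1..N}"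
  using prod.ub_add_nat[of m k g "N - k"] assms by simp

lemma pochhammer_eq_prod: "pochhammer \<theta> n = (\<Prod>j\<in>{1..n}. \<theta> + of_nat (j - 1))"
  by (induction n) (simp_all add: pochhammer_Suc)

section \<open>The winning weight\<close>

lemma is_lrm_at_max:
  assumes p: "p permutes {1..N}" and m: "m \<in> {1..N}" "p m = N"
  shows "is_lrm p m"
  unfolding is_lrm_def
proof
  fix i
  assume "i \<in> {1..<m}"
  then have "p i \<in> {1..N}" "p i \<noteq> p m"
    using m permutes_in_image[OF p] permutes_inj[OF p] by (auto dest: injD)
  then show "p i < p m" using m by auto
qed

lemma not_is_lrm_after_max:
  assumes p: "p permutes {1..N}" and "p m = N" "m < j" "j \<le> N"
  shows "\<not> is_lrm p j"
proof
  assume lrm: "is_lrm p j"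
  have "m \<in> {1..N}"
    using assms permutes_not_in[OF p, of m] by (cases "m \<in> {1..N}") auto
  then have "p m < p j"
    using lrm assms unfolding is_lrm_def by auto
  moreover have "p j \<le> N"
    using permutes_in_image[OF p, of j] assms by auto
  ultimately show False using assms by simp
qed

lemma winnable_iff_unique_lrm_after:
  assumes p: "p permutes {1..N}"
  shows "winnable N k p \<longleftrightarrow> (\<exists>m\<in>{k+1..N}. {j\<in>{k+1..N}. is_lrm p j} = {m})"
proof
  assume "winnable N k p"
  then obtain m where m: "k < m" "m \<le> N" "is_lrm p m" "p m = N"
    and before: "\<forall>i. k < i \<and> i < m \<longrightarrow> \<not> is_lrm p i"
    unfolding winnable_def by blast
  have "i = m" if "i \<in> {k+1..N}" "is_lrm p i" for i
  proof (cases i m rule: linorder_cases)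
    case less
    then show ?thesis using before that by auto
  next
    case greater
    then show ?thesis using not_is_lrm_after_max[OF p \<open>p m = N\<close>] that by auto
  qed
  then have "{j\<in>{k+1..N}. is_lrm p j} = {m}"
    using m by auto
  then show "\<exists>m\<in>{k+1..N}. {j\<in>{k+1..N}. is_lrm p j} = {m}"
    using m by auto
next
  assume "\<exists>m\<in>{k+1..N}. {j\<in>{k+1..N}. is_lrm p j} = {m}"
  then obtain m where m: "m \<in> {k+1..N}" and unique: "{j\<in>{k+1..N}. is_lrm p j} = {m}"
    by blast
  have "N \<in> p ` {1..N}"
    using m permutes_image[OF p] by auto
  then obtain m0 where m0: "m0 \<in> {1..N}" "p m0 = N"
    by auto
  have only_m: "i = m" if "i \<in> {k+1..N}" "is_lrm p i" for i
    using unique that by blast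
  have "is_lrm p m"
    using unique by blast
  then have "\<not> m0 < m"
    using not_is_lrm_after_max[OF p \<open>p m0 = N\<close>] m by auto
  then have "m0 = m"
    using only_m m m0 is_lrm_at_max[OF p m0] by simp
  moreover have "\<not> is_lrm p i" if "k < i" "i < m" for i
    using only_m[of i] that m by auto
  ultimately show "winnable N k p"
    unfolding winnable_def using m m0 \<open>is_lrm p m\<close> by (intro exI[of _ m]) auto
qed

lemma unique_lrm_weight_eq_prod:
  fixes \<theta> :: real
  assumes m: "m \<in> {k+1..N}"
  shows "(if {j\<in>{k+1..N}. is_lrm p j} = {m} then \<theta> ^ lrm N p else 0)
       = (\<Prod>j\<in>{1..N}. if is_lrm p j then (if j \<le> k \<or> j = m then \<theta> else 0)
                                       else (if j \<le> k \<or> j \<noteq> m then 1 else 0))"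
proof (cases "{j\<in>{k+1..N}. is_lrm p j} = {m}")
  case True
  then have "is_lrm p j \<longleftrightarrow> j = m" if "j \<in> {k+1..N}" for j
    using that by blast
  then show ?thesis
    using True by (auto simp: power_lrm_eq_prod intro!: prod.cong)
next
  case False
  have "\<exists>j\<in>{1..N}. (if is_lrm p j then (if j \<le> k \<or> j = m then \<theta> else 0)
                                    else (if j \<le> k \<or> j \<noteq> m then 1 else 0)) = 0"
  proof (cases "is_lrm p m")
    case True
    then obtain j where "j \<in> {k+1..N}" "is_lrm p j" "j \<noteq> m"
      using False m by auto
    then show ?thesis by (intro bexI[of _ j]) auto
  next
    case False
    then show ?thesis using m by (intro bexI[of _ m]) auto
  qed
  then show ?thesis
    using False by simp
qed

lemma W_eq_sum_unique_lrm:
  "W N k \<theta> = (\<Sum>p | p permutes {1..N}. \<Sum>m\<in>{k+1..N}.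
                  if {j\<in>{k+1..N}. is_lrm p j} = {m} then \<theta> ^ lrm N p else 0)"
proof -
  let ?P = "{p. p permutes {1..N}}"
  have "finite ?P"
    by (simp add: finite_permutations)
  then have "W N k \<theta> = (\<Sum>p\<in>?P. if winnable N k p then \<theta> ^ lrm N p else 0)"
    unfolding W_def using sum.inter_filter[of ?P "\<lambda>p. \<theta> ^ lrm N p" "winnable N k"]
    by (simp add: conj_commute)
  also have "\<dots> = (\<Sum>p\<in>?P. \<Sum>m\<in>{k+1..N}. if {j\<in>{k+1..N}. is_lrm p j} = {m} then \<theta> ^ lrm N p else 0)"
  proof (rule sum.cong[OF refl])
    fix p
    assume "p \<in> ?P"
    then have winnable: "winnable N k p \<longleftrightarrow> (\<exists>m\<in>{k+1..N}. {j\<in>{k+1..N}. is_lrm p j} = {m})"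
      by (simp add: winnable_iff_unique_lrm_after)
    show "(if winnable N k p then \<theta> ^ lrm N p else 0)
        = (\<Sum>m\<in>{k+1..N}. if {j\<in>{k+1..N}. is_lrm p j} = {m} then \<theta> ^ lrm N p else 0)"
    proof (cases "winnable N k p")
      case True
      then obtain m0 where m0: "m0 \<in> {k+1..N}" "{j\<in>{k+1..N}. is_lrm p j} = {m0}"
        using winnable by blast
      then have "(\<Sum>m\<in>{k+1..N}. if {j\<in>{k+1..N}. is_lrm p j} = {m} then \<theta> ^ lrm N p else 0)
          = (\<Sum>m\<in>{k+1..N}. if m0 = m then \<theta> ^ lrm N p else 0)"
        by (intro sum.cong) auto
      then show ?thesis
        using True m0 by simp
    next
      case False
      then show ?thesis
        using winnable by (auto intro!: sum.neutral)
    qed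
  qed
  finally show ?thesis .
qed

lemma W_closed_form:
  fixes \<theta> :: real
  assumes "k \<le> N"
  shows "W N k \<theta> = \<theta> * pochhammer \<theta> k * (\<Sum>m\<in>{k+1..N}. \<Prod>j\<in>{k+1..N}-{m}. real (j - 1))"
proof -
  let ?A = "\<lambda>m j. if j \<le> k \<or> j = m then \<theta> else 0"
  let ?B = "\<lambda>m j. if j \<le> k \<or> j \<noteq> m then 1 else 0"
  have "W N k \<theta> = (\<Sum>m\<in>{k+1..N}. \<Sum>p | p permutes {1..N}. \<Prod>j\<in>{1..N}. if is_lrm p j then ?A m j else ?B m j)"
    unfolding W_eq_sum_unique_lrm by (subst sum.swap) (intro sum.cong refl unique_lrm_weight_eq_prod)
  also have "\<dots> = (\<Sum>m\<in>{k+1..N}. \<Prod>j\<in>{1..N}. ?A m j + real (j - 1) * ?B m j)"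
    by (simp only: sum_permutes_prod_lrm of_nat_id)
  also have "\<dots> = (\<Sum>m\<in>{k+1..N}. \<theta> * pochhammer \<theta> k * (\<Prod>j\<in>{k+1..N}-{m}. real (j - 1)))"
  proof (rule sum.cong[OF refl])
    fix m
    assume m: "m \<in> {k+1..N}"
    have "(\<Prod>j\<in>{1..N}. ?A m j + real (j - 1) * ?B m j)
        = (\<Prod>j\<in>{1..k}. ?A m j + real (j - 1) * ?B m j) * (\<Prod>j\<in>{k+1..N}. ?A m j + real (j - 1) * ?B m j)"
      using assms by (rule prod_atLeastAtMost_split) simp
    also have "(\<Prod>j\<in>{1..k}. ?A m j + real (j - 1) * ?B m j) = pochhammer \<theta> k"
      unfolding pochhammer_eq_prod by (rule prod.cong) auto
    also have "(\<Prod>j\<in>{k+1..N}. ?A m j + real (j - 1) * ?B m j)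
        = \<theta> * (\<Prod>j\<in>{k+1..N}-{m}. ?A m j + real (j - 1) * ?B m j)"
      using m by (simp add: prod.remove)
    also have "(\<Prod>j\<in>{k+1..N}-{m}. ?A m j + real (j - 1) * ?B m j) = (\<Prod>j\<in>{k+1..N}-{m}. real (j - 1))"
      by (rule prod.cong) auto
    finally show "(\<Prod>j\<in>{1..N}. ?A m j + real (j - 1) * ?B m j)
        = \<theta> * pochhammer \<theta> k * (\<Prod>j\<in>{k+1..N}-{m}. real (j - 1))"
      by simp
  qed
  finally show ?thesis
    by (simp add: sum_distrib_left)
qed

section \<open>Tail harmonic sums\<close>

lemma ln_diff_le_sum_inverse:
  "k \<le> n \<Longrightarrow> ln (real n + 1) - ln (real k + 1) \<le> (\<Sum>i\<in>{k+1..n}. 1 / real i)"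
proof (induction n)
  case (Suc n)
  show ?case
  proof (cases "k = Suc n")
    case False
    then have "k \<le> n" using Suc.prems by simp
    have "ln (real n + 2) - ln (real n + 1) = ln ((real n + 2) / (real n + 1))"
      by (simp add: ln_div)
    also have "\<dots> \<le> (real n + 2) / (real n + 1) - 1"
      by (rule ln_le_minus_one) simp
    also have "\<dots> = 1 / real (Suc n)"
      by (simp add: field_simps)
    finally show ?thesis
      using Suc.IH[OF \<open>k \<le> n\<close>] \<open>k \<le> n\<close> by (simp add: add.commute)
  qed simp
qed simp

lemma sum_inverse_le_ln_diff:
  "1 \<le> k \<Longrightarrow> k \<le> n \<Longrightarrow> (\<Sum>i\<in>{k+1..n}. 1 / real i) \<le> ln (real n) - ln (real k)"
proof (induction n)
  case (Suc n)
  show ?case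
  proof (cases "k = Suc n")
    case False
    then have "k \<le> n" "1 \<le> n" using Suc.prems by simp_all
    have "ln (real n) - ln (real n + 1) = ln (real n / (real n + 1))"
      using \<open>1 \<le> n\<close> by (simp add: ln_div)
    also have "\<dots> \<le> real n / (real n + 1) - 1"
      by (rule ln_le_minus_one) (use \<open>1 \<le> n\<close> in simp)
    also have "\<dots> = - (1 / real (Suc n))"
      by (simp add: field_simps)
    finally show ?thesis
      using Suc.IH[OF Suc.prems(1) \<open>k \<le> n\<close>] \<open>k \<le> n\<close> by (simp add: add.commute)
  qed simp
qed simp

lemma H_antimono: "k \<le> k' \<Longrightarrow> H N k' \<le> H N k"
  unfolding H_def by (rule sum_mono2) auto

lemma H_pos: "k + 2 \<le> N \<Longrightarrow> H N k > 0"
  unfolding H_def by (rule sum_pos) auto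

lemma H_diff_pred: "1 \<le> k \<Longrightarrow> k < N \<Longrightarrow> H N (k - 1) = 1 / real k + H N k"
proof -
  assume "1 \<le> k" "k < N"
  then have "{k - 1 + 1..N - 1} = insert k {k+1..N-1}" by auto
  then show ?thesis unfolding H_def by simp
qed

lemma H_eq_sum_inverse_pred:
  assumes "1 \<le> k"
  shows "H N (k - 1) = (\<Sum>m\<in>{k+1..N}. 1 / real (m - 1))"
proof (cases "k \<le> N")
  case True
  have "(\<Sum>m\<in>{k+1..N}. 1 / real (m - 1)) = (\<Sum>m\<in>{k+1..(N-1)+1}. 1 / real (m - 1))"
    using True assms by simp
  also have "\<dots> = (\<Sum>i\<in>{k..N-1}. 1 / real i)"
    by (subst sum.shift_bounds_cl_nat_ivl) simp
  finally show ?thesis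
    unfolding H_def using assms by simp
qed (simp add: H_def)

lemma ln_le_H: "k < N \<Longrightarrow> ln (real N) - ln (real k + 1) \<le> H N k"
  using ln_diff_le_sum_inverse[of k "N - 1"] by (simp add: H_def)

lemma H_le_ln: "1 \<le> k \<Longrightarrow> k < N \<Longrightarrow> H N k \<le> ln (real (N - 1)) - ln (real k)"
  using sum_inverse_le_ln_diff[of k "N - 1"] by (simp add: H_def)

section \<open>The optimal threshold\<close>

lemma H_last: "2 \<le> N \<Longrightarrow> H N (N - 2) = 1 / (real N - 1)"
proof -
  assume "2 \<le> N"
  then have "{N - 2 + 1..N - 1} = {N - 1}" by auto
  then show ?thesis
    using \<open>2 \<le> N\<close> by (simp add: H_def)
qed

lemma ex1_H_threshold:
  assumes "H N (N - 2) \<le> x" "x < H N 0"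
  shows "\<exists>!k. 1 \<le> k \<and> k \<le> N - 2 \<and> x < H N (k - 1) \<and> H N k \<le> x"
proof
  define k0 where "k0 = (LEAST k. H N k \<le> x)"
  have "H N k0 \<le> x" "k0 \<le> N - 2"
    using assms(1) unfolding k0_def by (auto intro: LeastI Least_le)
  moreover have "k0 \<noteq> 0"
    using assms(2) \<open>H N k0 \<le> x\<close> by (cases "k0 = 0") auto
  moreover have "\<not> H N (k0 - 1) \<le> x"
    unfolding k0_def by (rule not_less_Least) (use \<open>k0 \<noteq> 0\<close> k0_def in simp)
  ultimately show "1 \<le> k0 \<and> k0 \<le> N - 2 \<and> x < H N (k0 - 1) \<and> H N k0 \<le> x"
    by auto
  fix k
  assume k: "1 \<le> k \<and> k \<le> N - 2 \<and> x < H N (k - 1) \<and> H N k \<le> x"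
  show "k = k0"
  proof (rule ccontr)
    assume "k \<noteq> k0"
    then consider "k < k0" | "k0 < k" by linarith
    then show False
    proof cases
      case 1
      then have "H N (k0 - 1) \<le> H N k"
        by (intro H_antimono) simp
      then show False
        using k \<open>\<not> H N (k0 - 1) \<le> x\<close> by simp
    next
      case 2
      then have "H N (k - 1) \<le> H N k0"
        by (intro H_antimono) simp
      then show False
        using k \<open>H N k0 \<le> x\<close> by simp
    qed
  qed
qed

lemma kappa_characterization:
  fixes \<theta> :: real
  assumes \<theta>: "\<theta> > 0" and N: "2 \<le> N" "\<theta> \<le> real N - 1" and H0: "1 / \<theta> < H N 0"
  shows "1 \<le> kappa N \<theta> \<and> kappa N \<theta> \<le> N - 2 \<and> 1 / \<theta> < H N (kappa N \<theta> - 1) \<and> H N (kappa N \<theta>) \<le> 1 / \<theta>"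
proof -
  have inverse_H_iff: "inverse (H N j) < \<theta> \<longleftrightarrow> 1 / \<theta> < H N j" "\<theta> \<le> inverse (H N j) \<longleftrightarrow> H N j \<le> 1 / \<theta>"
    if "j + 2 \<le> N" for j
    using H_pos[OF that] \<theta> by (auto simp: field_simps)
  have "H N (N - 2) \<le> 1 / \<theta>"
    using \<theta> N by (simp add: H_last frac_le)
  then have ex1: "\<exists>!k. 1 \<le> k \<and> k \<le> N - 2 \<and> 1 / \<theta> < H N (k - 1) \<and> H N k \<le> 1 / \<theta>"
    using H0 by (rule ex1_H_threshold)
  have "(1 \<le> k \<and> k \<le> N - 2 \<and> inverse (H N (k - 1)) < \<theta> \<and> \<theta> \<le> inverse (H N k))
      \<longleftrightarrow> (1 \<le> k \<and> k \<le> N - 2 \<and> 1 / \<theta> < H N (k - 1) \<and> H N k \<le> 1 / \<theta>)" for k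
    using inverse_H_iff[of "k - 1"] inverse_H_iff[of k] N by auto
  moreover have "\<not> \<theta> \<le> inverse (H N 0)"
    using inverse_H_iff(2)[of 0] N H0 by simp
  ultimately have "kappa N \<theta> = (THE k. 1 \<le> k \<and> k \<le> N - 2 \<and> 1 / \<theta> < H N (k - 1) \<and> H N k \<le> 1 / \<theta>)"
    unfolding kappa_def using N(2) by simp
  then show ?thesis
    using theI'[OF ex1] by simp
qed

lemma eventually_kappa_characterization:
  fixes \<theta> :: real
  assumes \<theta>: "\<theta> > 0"
  shows "eventually (\<lambda>N. 2 \<le> N \<and> 1 \<le> kappa N \<theta> \<and> kappa N \<theta> \<le> N - 2 \<and>
           1 / \<theta> < H N (kappa N \<theta> - 1) \<and> H N (kappa N \<theta>) \<le> 1 / \<theta>) sequentially"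
proof -
  have "filterlim (\<lambda>N. ln (real N)) at_top sequentially"
    by (rule filterlim_compose[OF ln_at_top filterlim_real_sequentially])
  then have "eventually (\<lambda>N. 1 / \<theta> < ln (real N)) sequentially"
    by (simp add: filterlim_at_top_dense)
  moreover have "eventually (\<lambda>N. \<theta> + 1 \<le> real N) sequentially"
    using filterlim_real_sequentially by (simp add: filterlim_at_top)
  moreover have "eventually (\<lambda>N. 2 \<le> N) sequentially"
    by (rule eventually_ge_at_top)
  ultimately show ?thesis
  proof eventually_elim
    case (elim N)
    then have "1 / \<theta> < H N 0"
      using ln_le_H[of 0 N] by simp
    then show ?case
      using kappa_characterization[OF \<theta>] elim by simp
  qed
qed

lemma real_le_exp_mult_if_H_le:
  assumes "k < N" "H N k \<le> x"
  shows "real N \<le> exp x * (real k + 1)"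
proof -
  have "ln (real N) \<le> x + ln (real k + 1)"
    using ln_le_H[OF assms(1)] assms(2) by linarith
  also have "\<dots> = ln (exp x * (real k + 1))"
    by (simp add: ln_mult)
  finally show ?thesis
    using assms(1) by (subst (asm) ln_le_cancel_iff) auto
qed

lemma real_less_exp_mult_if_less_H:
  assumes "1 \<le> k" "k < N" "x < H N (k - 1)"
  shows "real k < exp (1 / real k - x) * real (N - 1)"
proof -
  have "ln (real k) < (1 / real k - x) + ln (real (N - 1))"
    using H_diff_pred[OF assms(1,2)] H_le_ln[OF assms(1,2)] assms(3) by linarith
  also have "\<dots> = ln (exp (1 / real k - x) * real (N - 1))"
    using assms by (simp add: ln_mult)
  finally show ?thesis
    using assms by (subst (asm) ln_less_cancel_iff) auto
qed

lemma eventually_kappa_lower_bound: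
  fixes \<theta> :: real
  assumes \<theta>: "\<theta> > 0"
  shows "eventually (\<lambda>N. exp (- 1 / \<theta>) * real N - 1 \<le> real (kappa N \<theta>)) sequentially"
  using eventually_kappa_characterization[OF \<theta>]
proof eventually_elim
  case (elim N)
  then have "real N \<le> exp (1 / \<theta>) * (real (kappa N \<theta>) + 1)"
    by (intro real_le_exp_mult_if_H_le) auto
  then show ?case
    by (simp add: exp_minus field_simps)
qed

lemma kappa_tendsto_at_top:
  fixes \<theta> :: real
  assumes \<theta>: "\<theta> > 0"
  shows "filterlim (\<lambda>N. real (kappa N \<theta>)) at_top sequentially"
proof (rule filterlim_at_top_mono)
  have "filterlim (\<lambda>N. exp (- 1 / \<theta>) * real N) at_top sequentially"
    by (rule filterlim_tendsto_pos_mult_at_top[OF tendsto_const _ filterlim_real_sequentially]) simp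
  then show "filterlim (\<lambda>N. - 1 + exp (- 1 / \<theta>) * real N) at_top sequentially"
    by (rule filterlim_tendsto_add_at_top[OF tendsto_const])
  show "eventually (\<lambda>N. - 1 + exp (- 1 / \<theta>) * real N \<le> real (kappa N \<theta>)) sequentially"
    using eventually_kappa_lower_bound[OF \<theta>] by eventually_elim simp
qed

lemma kappa_div_tendsto:
  fixes \<theta> :: real
  assumes \<theta>: "\<theta> > 0"
  shows "(\<lambda>N. real (kappa N \<theta>) / real N) \<longlonglongrightarrow> exp (- 1 / \<theta>)"
proof (rule tendsto_sandwich)
  let ?c = "exp (- 1 / \<theta>)"
  show "(\<lambda>N. ?c - 1 / real N) \<longlonglongrightarrow> ?c"
    using tendsto_diff[OF tendsto_const lim_const_over_n[of 1]] by simp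
  have "(\<lambda>N. 1 / real (kappa N \<theta>)) \<longlonglongrightarrow> 0"
    using tendsto_inverse_0_at_top[OF kappa_tendsto_at_top[OF \<theta>]] by (simp add: inverse_eq_divide)
  then show "(\<lambda>N. ?c * exp (1 / real (kappa N \<theta>))) \<longlonglongrightarrow> ?c"
    using tendsto_mult[OF tendsto_const[of ?c] tendsto_exp] by fastforce
  show "eventually (\<lambda>N. ?c - 1 / real N \<le> real (kappa N \<theta>) / real N) sequentially"
    using eventually_kappa_lower_bound[OF \<theta>] eventually_ge_at_top[of "1::nat"]
  proof eventually_elim
    case (elim N)
    then have "(?c * real N - 1) / real N \<le> real (kappa N \<theta>) / real N"
      by (intro divide_right_mono) auto
    then show ?case
      using elim by (simp add: diff_divide_distrib)
  qed
  show "eventually (\<lambda>N. real (kappa N \<theta>) / real N \<le> ?c * exp (1 / real (kappa N \<theta>))) sequentially"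
    using eventually_kappa_characterization[OF \<theta>]
  proof eventually_elim
    case (elim N)
    then have "real (kappa N \<theta>) < exp (1 / real (kappa N \<theta>) - 1 / \<theta>) * real (N - 1)"
      by (intro real_less_exp_mult_if_less_H) auto
    also have "\<dots> \<le> ?c * exp (1 / real (kappa N \<theta>)) * real N"
      by (simp add: exp_diff exp_minus field_simps)
    finally show ?case
      using elim by (simp add: field_simps)
  qed
qed

lemma theta_H_kappa_tendsto:
  fixes \<theta> :: real
  assumes \<theta>: "\<theta> > 0"
  shows "(\<lambda>N. \<theta> * H N (kappa N \<theta> - 1)) \<longlonglongrightarrow> 1"
proof (rule tendsto_sandwich)
  show "eventually (\<lambda>N. 1 \<le> \<theta> * H N (kappa N \<theta> - 1)) sequentially"
    using eventually_kappa_characterization[OF \<theta>] by eventually_elim (use \<theta> in \<open>simp add: field_simps\<close>)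
  show "eventually (\<lambda>N. \<theta> * H N (kappa N \<theta> - 1) \<le> 1 + \<theta> * (1 / real (kappa N \<theta>))) sequentially"
    using eventually_kappa_characterization[OF \<theta>]
  proof eventually_elim
    case (elim N)
    then have "H N (kappa N \<theta> - 1) = 1 / real (kappa N \<theta>) + H N (kappa N \<theta>)"
      by (intro H_diff_pred) auto
    moreover have "\<theta> * H N (kappa N \<theta>) \<le> 1"
      using elim \<theta> by (simp add: field_simps)
    ultimately show ?case
      by (simp add: distrib_left)
  qed
  have "(\<lambda>N. 1 / real (kappa N \<theta>)) \<longlonglongrightarrow> 0"
    using tendsto_inverse_0_at_top[OF kappa_tendsto_at_top[OF \<theta>]] by (simp add: inverse_eq_divide)
  then show "(\<lambda>N. 1 + \<theta> * (1 / real (kappa N \<theta>))) \<longlonglongrightarrow> 1"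
    using tendsto_add[OF tendsto_const[of 1] tendsto_mult[OF tendsto_const[of \<theta>]]] by fastforce
qed simp

section \<open>The limiting winning probability\<close>

lemma W_div_pochhammer:
  fixes \<theta> :: real
  assumes \<theta>: "\<theta> > 0" and k: "1 \<le> k" "k \<le> N"
  shows "W N k \<theta> / pochhammer \<theta> N = \<theta> * H N (k - 1) * (\<Prod>j\<in>{k+1..N}. real (j - 1) / (\<theta> + real (j - 1)))"
proof -
  let ?P = "\<Prod>j\<in>{k+1..N}. real (j - 1)"
  have sum_eq: "(\<Sum>m\<in>{k+1..N}. \<Prod>j\<in>{k+1..N}-{m}. real (j - 1)) = ?P * H N (k - 1)"
    unfolding H_eq_sum_inverse_pred[OF k(1)] sum_distrib_left
  proof (rule sum.cong[OF refl])
    fix m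
    assume m: "m \<in> {k+1..N}"
    then have "real (m - 1) \<noteq> 0" using k by auto
    then show "(\<Prod>j\<in>{k+1..N}-{m}. real (j - 1)) = ?P * (1 / real (m - 1))"
      using m by (simp add: prod.remove)
  qed
  have poch_eq: "pochhammer \<theta> N = pochhammer \<theta> k * (\<Prod>j\<in>{k+1..N}. \<theta> + real (j - 1))"
    unfolding pochhammer_eq_prod using k by (intro prod_atLeastAtMost_split) simp_all
  have "pochhammer \<theta> k > 0"
    using \<theta> by (simp add: pochhammer_pos)
  then have "W N k \<theta> / pochhammer \<theta> N = \<theta> * H N (k - 1) * (?P / (\<Prod>j\<in>{k+1..N}. \<theta> + real (j - 1)))"
    unfolding W_closed_form[OF k(2)] sum_eq poch_eq by simp
  then show ?thesis
    by (simp add: prod_dividef)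
qed

lemma prod_div_eq_exp_sum_ln:
  fixes \<theta> :: real
  assumes \<theta>: "\<theta> > 0" and k: "1 \<le> k"
  shows "(\<Prod>j\<in>{k+1..N}. real (j - 1) / (\<theta> + real (j - 1))) = exp (- (\<Sum>j\<in>{k+1..N}. ln (1 + \<theta> / real (j - 1))))"
proof -
  have term_eq: "real (j - 1) / (\<theta> + real (j - 1)) = exp (- ln (1 + \<theta> / real (j - 1)))"
    if "j \<in> {k+1..N}" for j
  proof -
    have "real (j - 1) > 0"
      using that k by auto
    then show ?thesis
      using \<theta> by (simp add: exp_minus add_pos_nonneg field_simps)
  qed
  show ?thesis
    unfolding sum_negf[symmetric] exp_sum[OF finite_atLeastAtMost] by (rule prod.cong[OF refl]) (rule term_eq)
qed

text \<open>From \<open>x - x\<^sup>2 \<le> ln (1 + x) \<le> x\<close> with \<open>x = \<theta> / (j - 1) \<le> \<theta> / k\<close>.\<close>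

lemma sum_ln_bounds:
  fixes \<theta> :: real
  assumes \<theta>: "\<theta> > 0" and k: "1 \<le> k" "\<theta> \<le> real k"
  shows "\<theta> * H N (k - 1) * (1 - \<theta> / real k) \<le> (\<Sum>j\<in>{k+1..N}. ln (1 + \<theta> / real (j - 1)))"
    and "(\<Sum>j\<in>{k+1..N}. ln (1 + \<theta> / real (j - 1))) \<le> \<theta> * H N (k - 1)"
proof -
  have H_eq: "\<theta> * H N (k - 1) = (\<Sum>j\<in>{k+1..N}. \<theta> / real (j - 1))"
    unfolding H_eq_sum_inverse_pred[OF k(1)] by (simp add: sum_distrib_left)
  show "(\<Sum>j\<in>{k+1..N}. ln (1 + \<theta> / real (j - 1))) \<le> \<theta> * H N (k - 1)"
    unfolding H_eq by (rule sum_mono) (use \<theta> in \<open>auto intro: ln_add_one_self_le_self\<close>)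
  show "\<theta> * H N (k - 1) * (1 - \<theta> / real k) \<le> (\<Sum>j\<in>{k+1..N}. ln (1 + \<theta> / real (j - 1)))"
    unfolding H_eq sum_distrib_right
  proof (rule sum_mono)
    fix j
    assume j: "j \<in> {k+1..N}"
    define x where "x = \<theta> / real (j - 1)"
    have "0 \<le> x"
      unfolding x_def using \<theta> by simp
    have x_le: "x \<le> \<theta> / real k"
      unfolding x_def using \<theta> k j by (intro divide_left_mono) auto
    have "\<theta> / real k \<le> 1"
      using \<theta> k by (simp add: divide_le_eq)
    then have "x \<le> 1"
      using x_le by linarith
    have "x * (1 - \<theta> / real k) \<le> x * (1 - x)"
      using x_le \<open>0 \<le> x\<close> by (intro mult_left_mono) auto
    also have "\<dots> = x - x\<^sup>2"
      by (simp add: power2_eq_square algebra_simps)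
    also have "\<dots> \<le> ln (1 + x)"
      using \<open>0 \<le> x\<close> \<open>x \<le> 1\<close> by (rule ln_one_plus_pos_lower_bound)
    finally show "\<theta> / real (j - 1) * (1 - \<theta> / real k) \<le> ln (1 + \<theta> / real (j - 1))"
      unfolding x_def .
  qed
qed

lemma W_div_pochhammer_tendsto:
  fixes \<theta> :: real and k :: "nat \<Rightarrow> nat"
  assumes \<theta>: "\<theta> > 0"
    and k_lim: "filterlim (\<lambda>N. real (k N)) at_top sequentially"
    and k_le: "eventually (\<lambda>N. k N \<le> N) sequentially"
    and H_lim: "(\<lambda>N. \<theta> * H N (k N - 1)) \<longlonglongrightarrow> 1"
  shows "(\<lambda>N. W N (k N) \<theta> / pochhammer \<theta> N) \<longlonglongrightarrow> exp (- 1)"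
proof -
  define S where "S N = (\<Sum>j\<in>{k N + 1..N}. ln (1 + \<theta> / real (j - 1)))" for N
  have "eventually (\<lambda>N. max 1 \<theta> \<le> real (k N)) sequentially"
    using k_lim unfolding filterlim_at_top by blast
  then have k_large: "eventually (\<lambda>N. 1 \<le> k N \<and> \<theta> \<le> real (k N)) sequentially"
    by eventually_elim auto
  have inverse_k: "(\<lambda>N. \<theta> / real (k N)) \<longlonglongrightarrow> 0"
    using tendsto_mult[OF tendsto_const[of \<theta>] tendsto_inverse_0_at_top[OF k_lim]]
    by (simp add: divide_inverse)
  have "S \<longlonglongrightarrow> 1"
  proof (rule tendsto_sandwich)
    show "eventually (\<lambda>N. \<theta> * H N (k N - 1) * (1 - \<theta> / real (k N)) \<le> S N) sequentially"
      using k_large by eventually_elim (unfold S_def, rule sum_ln_bounds(1)[OF \<theta>], auto)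
    show "eventually (\<lambda>N. S N \<le> \<theta> * H N (k N - 1)) sequentially"
      using k_large by eventually_elim (unfold S_def, rule sum_ln_bounds(2)[OF \<theta>], auto)
    show "(\<lambda>N. \<theta> * H N (k N - 1) * (1 - \<theta> / real (k N))) \<longlonglongrightarrow> 1"
      using tendsto_mult[OF H_lim tendsto_diff[OF tendsto_const[of 1] inverse_k]] by simp
  qed (rule H_lim)
  then have "(\<lambda>N. \<theta> * H N (k N - 1) * exp (- S N)) \<longlonglongrightarrow> 1 * exp (- 1)"
    by (intro tendsto_mult H_lim tendsto_exp tendsto_minus)
  moreover have "eventually (\<lambda>N. \<theta> * H N (k N - 1) * exp (- S N) = W N (k N) \<theta> / pochhammer \<theta> N) sequentially"
    using k_large k_le
  proof eventually_elim
    case (elim N)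
    then have "1 \<le> k N" "k N \<le> N"
      by auto
    show ?case
      unfolding S_def W_div_pochhammer[OF \<theta> \<open>1 \<le> k N\<close> \<open>k N \<le> N\<close>]
        prod_div_eq_exp_sum_ln[OF \<theta> \<open>1 \<le> k N\<close>]
      by (rule refl)
  qed
  ultimately show ?thesis
    by (simp add: tendsto_cong)
qed

theorem mainTheorem11:
  fixes \<theta> :: real
  assumes "\<theta> > 0"
  shows "(\<lambda>N. real (kappa N \<theta>) / real N) \<longlonglongrightarrow> exp (- 1 / \<theta>) \<and>
    (\<lambda>N. W N (kappa N \<theta>) \<theta> / rising \<theta> N) \<longlonglongrightarrow> exp (- 1)"
proof
  show "(\<lambda>N. real (kappa N \<theta>) / real N) \<longlonglongrightarrow> exp (- 1 / \<theta>)"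
    using assms by (rule kappa_div_tendsto)
  have "eventually (\<lambda>N. kappa N \<theta> \<le> N) sequentially"
    using eventually_kappa_characterization[OF assms] by eventually_elim linarith
  then show "(\<lambda>N. W N (kappa N \<theta>) \<theta> / rising \<theta> N) \<longlonglongrightarrow> exp (- 1)"
    unfolding rising_def
    using W_div_pochhammer_tendsto[OF assms kappa_tendsto_at_top[OF assms]] theta_H_kappa_tendsto[OF assms]
    by blast
qed

end
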